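(* Let $\Gamma$ be a finitely generated stable LEF group, $\pi:\mathbb{F}\twoheadrightarrow\Gamma$ an epimorphism from a free group on a finite basis $X$, $S=\pi(X)$, and suppose there exists $C\ge1$ such that $F_\Gamma^\pi(x)\le Cx^C$ for all $x\ge1$. Then there exists $C'>0$ such that for every positive integer $l$, $\mathcal{L}_\Gamma^S(C'l^C)!\ge\mathcal{R}_\Gamma^S(l)$.
   Context: For finite $\Omega$, $d_\Omega(\sigma,\tau)=|\{\omega:\sigma(\omega)\ne\tau(\omega)\}|/|\Omega|$. A pair $(\delta,E)$, $\delta\in(0,1]$, $E\subseteq\ker\pi$ finite, is valid for $\epsilon>0$ if for every finite $\Omega$ and homomorphism $\rho:\mathbb{F}\to\mathrm{Sym}(\Omega)$ with $d_\Omega(\rho(r),\mathrm{id})<\delta$ for all $r\in E$ there is a homomorphism $\phi:\Gamma\to\mathrm{Sym}(\Omega)$ with $d_\Omega(\rho(x),\phi(\pi(x)))<\epsilon$ for all $x\in X$; $\Gamma$ is stable if valid pairs exist for all $\epsilon$. $F_\Gamma^\pi(x)=\inf\{\|E\|/\delta:(\delta,E)\text{ valid for }1/x\}$, $\|E\|=\sum_{r\in E}|r|$. $B_S(t)$ is the ball of radius $t$ in the word metric of $S$. A local embedding of $A\subseteq\Gamma$ into a group $\Delta$ is an injective map $\psi$ with $\psi(gh)=\psi(g)\psi(h)$ whenever $g,h,gh\in A$; $\Gamma$ is LEF if every finite subset locally embeds in a finite group. $\mathcal{L}_\Gamma^S(t)$ is the minimal order of a finite group admitting a local embedding of $B_S(t)$;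 $\mathcal{R}_\Gamma^S(l)$ is the minimal order of a finite group $\Delta$ with a homomorphism $\Gamma\to\Delta$ injective on $B_S(l)$. *)

theory Defs
  imports "HOL-Algebra.Algebra" Complex_Main
begin

text \<open>A letter (x, True) stands for x, (x, False) for x^-1.\<close>

fun red_cons :: "('x \<times> bool) \<Rightarrow> ('x \<times> bool) list \<Rightarrow> ('x \<times> bool) list" where
  "red_cons a [] = [a]"
| "red_cons a (b # w) = (if fst a = fst b \<and> snd a \<noteq> snd b then w else a # b # w)"

definition reduce :: "('x \<times> bool) list \<Rightarrow> ('x \<times> bool) list" where
  "reduce w = foldr red_cons w []"

fun reduced :: "('x \<times> bool) list \<Rightarrow> bool" where
  "reduced [] = True"
| "reduced [a] = True"
| "reduced (a # b # w) = (\<not> (fst a = fst b \<and> snd a \<noteq> snd b) \<and> reduced (b # w))"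

definition free_group :: "'x set \<Rightarrow> ('x \<times> bool) list monoid" where
  "free_group B = \<lparr> partial_object.carrier = {w. fst ` set w \<subseteq> B \<and> reduced w},
                    monoid.mult = (\<lambda>u v. reduce (u @ v)),
                    monoid.one = [] \<rparr>"

definition free_gen :: "'x \<Rightarrow> ('x \<times> bool) list" where
  "free_gen x = [(x, True)]"

text \<open>Word length |r| of an element of the free group = length of the reduced word.\<close>

definition ham_dist :: "nat set \<Rightarrow> (nat \<Rightarrow> nat) \<Rightarrow> (nat \<Rightarrow> nat) \<Rightarrow> real" where
  "ham_dist \<Omega> \<sigma> \<tau> = real (card {w \<in> \<Omega>. \<sigma> w \<noteq> \<tau> w}) / real (card \<Omega>)"

text \<open>Finite sets Omega are taken as finite subsets of nat (every finite set is in
  bijection with one); Sym(Omega) is BijGroup Omega.\<close>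

definition valid_pair ::
  "'x set \<Rightarrow> ('g, 'm) monoid_scheme \<Rightarrow> (('x \<times> bool) list \<Rightarrow> 'g) \<Rightarrow> real \<Rightarrow> real
    \<Rightarrow> ('x \<times> bool) list set \<Rightarrow> bool" where
  "valid_pair B G \<pi> \<epsilon> \<delta> E \<longleftrightarrow>
     0 < \<delta> \<and> \<delta> \<le> 1 \<and> finite E \<and> E \<subseteq> kernel (free_group B) G \<pi> \<and>
     (\<forall>\<Omega> :: nat set. \<forall>\<rho>. finite \<Omega> \<longrightarrow> \<rho> \<in> hom (free_group B) (BijGroup \<Omega>) \<longrightarrow>
        (\<forall>r\<in>E. ham_dist \<Omega> (\<rho> r) id < \<delta>) \<longrightarrow>
        (\<exists>\<phi> \<in> hom G (BijGroup \<Omega>).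
           \<forall>x\<in>B. ham_dist \<Omega> (\<rho> (free_gen x)) (\<phi> (\<pi> (free_gen x))) < \<epsilon>))"

definition stable ::
  "'x set \<Rightarrow> ('g, 'm) monoid_scheme \<Rightarrow> (('x \<times> bool) list \<Rightarrow> 'g) \<Rightarrow> bool" where
  "stable B G \<pi> \<longleftrightarrow> (\<forall>\<epsilon>>0. \<exists>\<delta> E. valid_pair B G \<pi> \<epsilon> \<delta> E)"

definition word_set_norm :: "('x \<times> bool) list set \<Rightarrow> real" where
  "word_set_norm E = real (\<Sum>r\<in>E. length r)"

definition stability_fun ::
  "'x set \<Rightarrow> ('g, 'm) monoid_scheme \<Rightarrow> (('x \<times> bool) list \<Rightarrow> 'g) \<Rightarrow> real \<Rightarrow> real" where
  "stability_fun B G \<pi> x =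
     Inf {word_set_norm E / \<delta> | \<delta> E. valid_pair B G \<pi> (1 / x) \<delta> E}"

definition word_eval :: "('g, 'm) monoid_scheme \<Rightarrow> ('g \<times> bool) list \<Rightarrow> 'g" where
  "word_eval G w = foldr (\<lambda>(s, b) acc. (if b then s else inv\<^bsub>G\<^esub> s) \<otimes>\<^bsub>G\<^esub> acc) w \<one>\<^bsub>G\<^esub>"

definition word_ball :: "('g, 'm) monoid_scheme \<Rightarrow> 'g set \<Rightarrow> real \<Rightarrow> 'g set" where
  "word_ball G S t = {word_eval G w | w. fst ` set w \<subseteq> S \<and> real (length w) \<le> t}"

definition local_embedding ::
  "('g, 'm) monoid_scheme \<Rightarrow> 'g set \<Rightarrow> ('d, 'n) monoid_scheme \<Rightarrow> ('g \<Rightarrow> 'd) \<Rightarrow> bool" where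
  "local_embedding G A D \<psi> \<longleftrightarrow>
     inj_on \<psi> A \<and> \<psi> ` A \<subseteq> carrier D \<and>
     (\<forall>g\<in>A. \<forall>h\<in>A. g \<otimes>\<^bsub>G\<^esub> h \<in> A \<longrightarrow> \<psi> (g \<otimes>\<^bsub>G\<^esub> h) = \<psi> g \<otimes>\<^bsub>D\<^esub> \<psi> h)"

text \<open>Finite groups are represented by groups with carrier a subset of nat
  (every finite group is isomorphic to one).\<close>

definition LEF :: "('g, 'm) monoid_scheme \<Rightarrow> bool" where
  "LEF G \<longleftrightarrow> (\<forall>A. finite A \<longrightarrow> A \<subseteq> carrier G \<longrightarrow>
     (\<exists>D :: nat monoid. group D \<and> finite (carrier D) \<and> (\<exists>\<psi>. local_embedding G A D \<psi>)))"

definition LEF_growth :: "('g, 'm) monoid_scheme \<Rightarrow> 'g set \<Rightarrow> real \<Rightarrow> nat" where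
  "LEF_growth G S t = (LEAST n. \<exists>D :: nat monoid. group D \<and> finite (carrier D) \<and>
       card (carrier D) = n \<and> (\<exists>\<psi>. local_embedding G (word_ball G S t) D \<psi>))"

definition RF_growth :: "('g, 'm) monoid_scheme \<Rightarrow> 'g set \<Rightarrow> nat \<Rightarrow> nat" where
  "RF_growth G S l = (LEAST n. \<exists>D :: nat monoid. group D \<and> finite (carrier D) \<and>
       card (carrier D) = n \<and> (\<exists>h \<in> hom G D. inj_on h (word_ball G S (real l))))"

end

theory Submission
  imports Defs "HOL-Combinatorics.Permutations"
begin

(* Fix l and put t = C' l^C.  The polynomial bound on the stability function yields a valid
   pair (delta, E) for epsilon = 1/(3l) all of whose relators have length at most t.  Locally
   embed the ball B(t) into a finite group D of order L(t) by psi, and let the free group act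
   on D by letting each basis element x act as left translation by psi(pi x).  The relators
   in E are short, so psi is multiplicative along them and they act trivially; stability then
   gives an action phi of Gamma on D that is epsilon-close to this one on the generators.
   Since the Hamming distance on Sym(D) is bi-invariant, phi(g) is 1/3-close to left
   translation by psi(g) for every g in B(l).  So phi(g) = phi(h) forces the translations by
   psi(g) and psi(h) to agree at some point, whence psi(g) = psi(h) and g = h.  Thus phi is
   injective on B(l) and R(l) <= |Sym(D)| = L(t)!. *)

section \<open>Words and the free group\<close>

lemma word_eval_Nil [simp]: "word_eval G [] = \<one>\<^bsub>G\<^esub>"
  by (simp add: word_eval_def)

lemma word_eval_Cons [simp]:
  "word_eval G ((s, b) # w) = (if b then s else inv\<^bsub>G\<^esub> s) \<otimes>\<^bsub>G\<^esub> word_eval G w"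
  by (simp add: word_eval_def)

lemma fst_image_apfst [simp]: "fst ` apfst f ` A = f ` fst ` A"
  by force

lemma (in group) word_eval_closed:
  "fst ` set w \<subseteq> carrier G \<Longrightarrow> word_eval G w \<in> carrier G"
  by (induction w) auto

lemma (in group) word_eval_append:
  assumes "fst ` set u \<subseteq> carrier G" "fst ` set v \<subseteq> carrier G"
  shows "word_eval G (u @ v) = word_eval G u \<otimes> word_eval G v"
  using assms(1)
proof (induction u)
  case Nil
  then show ?case using word_eval_closed[OF assms(2)] by simp
next
  case (Cons a u)
  then show ?case
    using word_eval_closed[of u] word_eval_closed[OF assms(2)] by (cases a) (auto simp: m_assoc)
qed

lemma (in group_hom) hom_word_eval:
  "fst ` set w \<subseteq> carrier G \<Longrightarrow> h (word_eval G w) = word_eval H (map (apfst h) w)"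
proof (induction w)
  case (Cons a w)
  then show ?case using G.word_eval_closed[of w] by (cases a) auto
qed simp

lemma reduce_Cons: "reduce (a # w) = red_cons a (reduce w)"
  by (simp add: reduce_def)

lemma reduce_reduced: "reduced w \<Longrightarrow> reduce w = w"
proof (induction w rule: reduced.induct)
  case (3 a b w)
  then show ?case by (simp add: reduce_Cons)
qed (simp_all add: reduce_def)

lemma set_reduce: "set (reduce w) \<subseteq> set w"
proof (induction w)
  case (Cons a w)
  have "set (red_cons a v) \<subseteq> insert a (set v)" for v
    by (cases "(a, v)" rule: red_cons.cases) auto
  then show ?case using Cons by (fastforce simp: reduce_Cons)
qed (simp add: reduce_def)

lemma (in group) word_eval_red_cons:
  assumes "s ` fst ` set (a # w) \<subseteq> carrier G"
  shows "word_eval G (map (apfst s) (red_cons a w)) = word_eval G (map (apfst s) (a # w))"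
proof (cases "(a, w)" rule: red_cons.cases)
  case (2 a b w')
  then have "word_eval G (map (apfst s) w') \<in> carrier G"
    using assms word_eval_closed[of "map (apfst s) w'"] by simp
  with 2 assms show ?thesis
    by (cases a; cases b) (auto simp: m_assoc[symmetric])
qed auto

lemma (in group) word_eval_reduce:
  "s ` fst ` set w \<subseteq> carrier G \<Longrightarrow>
    word_eval G (map (apfst s) (reduce w)) = word_eval G (map (apfst s) w)"
proof (induction w)
  case (Cons a w)
  then have "s ` fst ` set (a # reduce w) \<subseteq> carrier G"
    using set_reduce[of w] by auto
  then show ?case
    using Cons word_eval_red_cons[where a = a and w = "reduce w"] by (cases a) (auto simp: reduce_Cons)
qed (simp add: reduce_def)

lemma free_group_carrier: "w \<in> carrier (free_group B) \<longleftrightarrow> fst ` set w \<subseteq> B \<and> reduced w"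
  by (simp add: free_group_def)

lemma free_group_mult: "u \<otimes>\<^bsub>free_group B\<^esub> v = reduce (u @ v)"
  by (simp add: free_group_def)

lemma (in group) word_eval_hom_free_group:
  assumes "s ` B \<subseteq> carrier G"
  shows "(\<lambda>w. word_eval G (map (apfst s) w)) \<in> hom (free_group B) G"
proof (rule homI)
  have letters_closed: "s ` fst ` set w \<subseteq> carrier G" if "w \<in> carrier (free_group B)" for w
    using that assms unfolding free_group_carrier by blast
  show "word_eval G (map (apfst s) w) \<in> carrier G" if "w \<in> carrier (free_group B)" for w
    using letters_closed[OF that] word_eval_closed[of "map (apfst s) w"] by simp
  fix u v assume "u \<in> carrier (free_group B)" "v \<in> carrier (free_group B)"
  then have "s ` fst ` set u \<subseteq> carrier G" "s ` fst ` set v \<subseteq> carrier G"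
    by (simp_all add: letters_closed)
  then show "word_eval G (map (apfst s) (u \<otimes>\<^bsub>free_group B\<^esub> v)) =
      word_eval G (map (apfst s) u) \<otimes> word_eval G (map (apfst s) v)"
    using word_eval_reduce[where w = "u @ v" and s = s]
    by (simp add: free_group_mult word_eval_append image_Un)
qed

lemma (in group) hom_free_group_Nil:
  assumes "\<pi> \<in> hom (free_group B) G"
  shows "\<pi> [] = \<one>"
proof -
  have "[] \<in> carrier (free_group B)" by (simp add: free_group_carrier)
  then have "\<pi> [] \<otimes> \<pi> [] = \<pi> []" and "\<pi> [] \<in> carrier G"
    using hom_mult[OF assms, of "[]" "[]"] hom_in_carrier[OF assms]
    by (auto simp: free_group_mult reduce_def)
  then show ?thesis by simp
qed

lemma (in group) hom_free_group_eq_word_eval: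
  assumes "\<pi> \<in> hom (free_group B) G" "w \<in> carrier (free_group B)"
  shows "\<pi> w = word_eval G (map (apfst (\<pi> \<circ> free_gen)) w)"
  using assms(2)
proof (induction w)
  case Nil
  then show ?case using hom_free_group_Nil[OF assms(1)] by simp
next
  case (Cons a w)
  obtain x b where a: "a = (x, b)" by fastforce
  have w: "w \<in> carrier (free_group B)" and x: "x \<in> B"
    using Cons.prems a by (auto simp: free_group_carrier elim: reduced.elims)
  have letters: "[(x, c)] \<in> carrier (free_group B)" for c
    using x by (simp add: free_group_carrier)
  have "\<pi> (a # w) = \<pi> [a] \<otimes> \<pi> w"
    using Cons.prems hom_mult[OF assms(1) letters[of b] w] a
    by (simp add: free_group_mult reduce_reduced free_group_carrier)
  moreover have "inv (\<pi> (free_gen x)) = \<pi> [(x, False)]"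
  proof (rule inv_equality)
    have "\<pi> [(x, False)] \<otimes> \<pi> [(x, True)] = \<pi> []"
      using hom_mult[OF assms(1) letters[of False] letters[of True]] by (simp add: free_group_mult reduce_def)
    then show "\<pi> [(x, False)] \<otimes> \<pi> (free_gen x) = \<one>"
      using hom_free_group_Nil[OF assms(1)] by (simp add: free_gen_def)
  qed (use hom_in_carrier[OF assms(1) letters] in \<open>auto simp: free_gen_def\<close>)
  ultimately show ?case
    using Cons.IH[OF w] a by (cases b) (auto simp: free_gen_def)
qed

section \<open>Hamming distance and left translations\<close>

lemma ham_dist_eq_0:
  assumes "\<And>\<omega>. \<omega> \<in> \<Omega> \<Longrightarrow> \<sigma> \<omega> = \<tau> \<omega>"
  shows "ham_dist \<Omega> \<sigma> \<tau> = 0"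
proof -
  have "{\<omega> \<in> \<Omega>. \<sigma> \<omega> \<noteq> \<tau> \<omega>} = {}" using assms by blast
  then have "card {\<omega> \<in> \<Omega>. \<sigma> \<omega> \<noteq> \<tau> \<omega>} = 0" by (simp only: card.empty)
  then show ?thesis unfolding ham_dist_def by simp
qed

lemma ham_dist_commute: "ham_dist \<Omega> \<sigma> \<tau> = ham_dist \<Omega> \<tau> \<sigma>"
proof -
  have "{\<omega> \<in> \<Omega>. \<sigma> \<omega> \<noteq> \<tau> \<omega>} = {\<omega> \<in> \<Omega>. \<tau> \<omega> \<noteq> \<sigma> \<omega>}" by auto
  then show ?thesis by (simp add: ham_dist_def)
qed

lemma ham_dist_triangle: "ham_dist \<Omega> \<sigma> \<tau> \<le> ham_dist \<Omega> \<sigma> \<mu> + ham_dist \<Omega> \<mu> \<tau>"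
proof (cases "finite \<Omega>")
  case True
  let ?D = "\<lambda>\<sigma> \<tau>. {\<omega> \<in> \<Omega>. \<sigma> \<omega> \<noteq> \<tau> \<omega>}"
  have "?D \<sigma> \<tau> \<subseteq> ?D \<sigma> \<mu> \<union> ?D \<mu> \<tau>"
  proof
    fix \<omega> assume "\<omega> \<in> ?D \<sigma> \<tau>"
    then show "\<omega> \<in> ?D \<sigma> \<mu> \<union> ?D \<mu> \<tau>" by (cases "\<sigma> \<omega> = \<mu> \<omega>") simp_all
  qed
  then have "card (?D \<sigma> \<tau>) \<le> card (?D \<sigma> \<mu> \<union> ?D \<mu> \<tau>)"
    using True by (intro card_mono) simp_all
  also have "\<dots> \<le> card (?D \<sigma> \<mu>) + card (?D \<mu> \<tau>)"
    by (rule card_Un_le)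
  finally have "real (card (?D \<sigma> \<tau>)) \<le> real (card (?D \<sigma> \<mu>)) + real (card (?D \<mu> \<tau>))"
    by linarith
  then show ?thesis
    unfolding ham_dist_def add_divide_distrib[symmetric] by (simp add: divide_right_mono)
qed (simp add: ham_dist_def)

lemma carrier_BijGroup [simp]: "carrier (BijGroup \<Omega>) = Bij \<Omega>"
  by (simp add: BijGroup_def)

lemma finite_Bij:
  assumes "finite \<Omega>"
  shows "finite (Bij \<Omega>)"
proof (rule finite_subset)
  show "Bij \<Omega> \<subseteq> \<Omega> \<rightarrow>\<^sub>E \<Omega>"
    unfolding PiE_def using Bij_imp_funcset Bij_imp_extensional by blast
  show "finite (\<Omega> \<rightarrow>\<^sub>E \<Omega>)"
    using assms by (simp add: finite_PiE)
qed

lemma card_Bij_le_fact: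
  assumes "finite \<Omega>"
  shows "card (Bij \<Omega>) \<le> fact (card \<Omega>)"
proof -
  have "Bij \<Omega> \<subseteq> (\<lambda>p. restrict p \<Omega>) ` {p. p permutes \<Omega>}"
  proof
    fix f assume f: "f \<in> Bij \<Omega>"
    then have "(\<lambda>x. if x \<in> \<Omega> then f x else x) permutes \<Omega>"
      by (intro bij_imp_permutes) (auto simp: Bij_def bij_betw_def inj_on_def image_def)
    moreover have "f = restrict (\<lambda>x. if x \<in> \<Omega> then f x else x) \<Omega>"
      using Bij_imp_extensional[OF f] by (auto simp: extensional_restrict restrict_def extensional_def)
    ultimately show "f \<in> (\<lambda>p. restrict p \<Omega>) ` {p. p permutes \<Omega>}" by blast
  qed
  then have "card (Bij \<Omega>) \<le> card ((\<lambda>p. restrict p \<Omega>) ` {p. p permutes \<Omega>})"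
    by (intro card_mono finite_imageI finite_permutations assms)
  also have "\<dots> \<le> card {p. p permutes \<Omega>}"
    by (rule card_image_le) (rule finite_permutations[OF assms])
  also have "\<dots> = fact (card \<Omega>)"
    by (rule card_permutations[OF refl assms])
  finally show ?thesis .
qed

lemma BijGroup_mult:
  "\<sigma> \<in> Bij \<Omega> \<Longrightarrow> \<tau> \<in> Bij \<Omega> \<Longrightarrow> \<sigma> \<otimes>\<^bsub>BijGroup \<Omega>\<^esub> \<tau> = compose \<Omega> \<sigma> \<tau>"
  by (simp add: BijGroup_def)

lemma ham_dist_compose:
  "ham_dist \<Omega> (compose \<Omega> \<sigma> \<tau>) (compose \<Omega> \<sigma>' \<tau>') = ham_dist \<Omega> (\<sigma> \<circ> \<tau>) (\<sigma>' \<circ> \<tau>')"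
  unfolding ham_dist_def compose_def by (metis (mono_tags, lifting) Collect_cong comp_apply restrict_apply')

lemma ham_dist_BijGroup_mult_left:
  assumes "\<sigma> \<in> Bij \<Omega>" "\<tau> \<in> Bij \<Omega>" "\<tau>' \<in> Bij \<Omega>"
  shows "ham_dist \<Omega> (\<sigma> \<otimes>\<^bsub>BijGroup \<Omega>\<^esub> \<tau>) (\<sigma> \<otimes>\<^bsub>BijGroup \<Omega>\<^esub> \<tau>') = ham_dist \<Omega> \<tau> \<tau>'"
proof -
  have "inj_on \<sigma> \<Omega>" "\<tau> \<in> \<Omega> \<rightarrow> \<Omega>" "\<tau>' \<in> \<Omega> \<rightarrow> \<Omega>"
    using assms by (auto simp: Bij_def bij_betw_def)
  then have "{\<omega> \<in> \<Omega>. \<sigma> (\<tau> \<omega>) \<noteq> \<sigma> (\<tau>' \<omega>)} = {\<omega> \<in> \<Omega>. \<tau> \<omega> \<noteq> \<tau>' \<omega>}"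
    by (auto dest: inj_onD)
  then show ?thesis
    using assms by (simp add: BijGroup_mult ham_dist_compose) (simp add: ham_dist_def)
qed

lemma ham_dist_BijGroup_mult_right:
  assumes "\<sigma> \<in> Bij \<Omega>" "\<sigma>' \<in> Bij \<Omega>" "\<tau> \<in> Bij \<Omega>"
  shows "ham_dist \<Omega> (\<sigma> \<otimes>\<^bsub>BijGroup \<Omega>\<^esub> \<tau>) (\<sigma>' \<otimes>\<^bsub>BijGroup \<Omega>\<^esub> \<tau>) = ham_dist \<Omega> \<sigma> \<sigma>'"
proof -
  have "bij_betw \<tau> \<Omega> \<Omega>" using assms by (simp add: Bij_def)
  then have "bij_betw \<tau> {\<omega> \<in> \<Omega>. \<sigma> (\<tau> \<omega>) \<noteq> \<sigma>' (\<tau> \<omega>)} {u \<in> \<Omega>. \<sigma> u \<noteq> \<sigma>' u}"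
    unfolding bij_betw_def by (auto intro: inj_on_subset)
  then show ?thesis
    using assms by (simp add: BijGroup_mult ham_dist_compose) (simp add: ham_dist_def bij_betw_same_card)
qed

lemma ham_dist_BijGroup_mult_le:
  assumes "\<sigma> \<in> Bij \<Omega>" "\<sigma>' \<in> Bij \<Omega>" "\<tau> \<in> Bij \<Omega>" "\<tau>' \<in> Bij \<Omega>"
  shows "ham_dist \<Omega> (\<sigma> \<otimes>\<^bsub>BijGroup \<Omega>\<^esub> \<tau>) (\<sigma>' \<otimes>\<^bsub>BijGroup \<Omega>\<^esub> \<tau>')
    \<le> ham_dist \<Omega> \<sigma> \<sigma>' + ham_dist \<Omega> \<tau> \<tau>'"
  using ham_dist_triangle[of \<Omega> "\<sigma> \<otimes>\<^bsub>BijGroup \<Omega>\<^esub> \<tau>" "\<sigma>' \<otimes>\<^bsub>BijGroup \<Omega>\<^esub> \<tau>'" "\<sigma> \<otimes>\<^bsub>BijGroup \<Omega>\<^esub> \<tau>'"]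
    ham_dist_BijGroup_mult_left[OF assms(1,3,4)] ham_dist_BijGroup_mult_right[OF assms(1,2,4)]
  by linarith

lemma ham_dist_BijGroup_inv:
  assumes "\<sigma> \<in> Bij \<Omega>" "\<tau> \<in> Bij \<Omega>"
  shows "ham_dist \<Omega> (inv\<^bsub>BijGroup \<Omega>\<^esub> \<sigma>) (inv\<^bsub>BijGroup \<Omega>\<^esub> \<tau>) = ham_dist \<Omega> \<sigma> \<tau>"
proof -
  interpret Sym: group "BijGroup \<Omega>" by (rule group_BijGroup)
  have inv_closed: "inv\<^bsub>BijGroup \<Omega>\<^esub> \<sigma> \<in> Bij \<Omega>" "inv\<^bsub>BijGroup \<Omega>\<^esub> \<tau> \<in> Bij \<Omega>"
    using assms Sym.inv_closed by simp_all
  have one_closed: "\<one>\<^bsub>BijGroup \<Omega>\<^esub> \<in> Bij \<Omega>" and mult_closed: "\<sigma> \<otimes>\<^bsub>BijGroup \<Omega>\<^esub> inv\<^bsub>BijGroup \<Omega>\<^esub> \<tau> \<in> Bij \<Omega>"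
    using assms inv_closed Sym.m_closed Sym.one_closed by simp_all
  have "ham_dist \<Omega> (inv\<^bsub>BijGroup \<Omega>\<^esub> \<sigma>) (inv\<^bsub>BijGroup \<Omega>\<^esub> \<tau>)
      = ham_dist \<Omega> (\<sigma> \<otimes>\<^bsub>BijGroup \<Omega>\<^esub> inv\<^bsub>BijGroup \<Omega>\<^esub> \<sigma>) (\<sigma> \<otimes>\<^bsub>BijGroup \<Omega>\<^esub> inv\<^bsub>BijGroup \<Omega>\<^esub> \<tau>)"
    by (rule ham_dist_BijGroup_mult_left[symmetric, OF assms(1) inv_closed])
  also have "\<dots> = ham_dist \<Omega> \<one>\<^bsub>BijGroup \<Omega>\<^esub> (\<sigma> \<otimes>\<^bsub>BijGroup \<Omega>\<^esub> inv\<^bsub>BijGroup \<Omega>\<^esub> \<tau>)"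
    using assms by simp
  also have "\<dots> = ham_dist \<Omega> (\<one>\<^bsub>BijGroup \<Omega>\<^esub> \<otimes>\<^bsub>BijGroup \<Omega>\<^esub> \<tau>)
      (\<sigma> \<otimes>\<^bsub>BijGroup \<Omega>\<^esub> inv\<^bsub>BijGroup \<Omega>\<^esub> \<tau> \<otimes>\<^bsub>BijGroup \<Omega>\<^esub> \<tau>)"
    using assms one_closed mult_closed by (simp only: ham_dist_BijGroup_mult_right)
  also have "\<dots> = ham_dist \<Omega> \<tau> \<sigma>"
    using assms inv_closed by (simp add: Sym.m_assoc)
  finally show ?thesis by (simp add: ham_dist_commute)
qed

lemma ham_dist_word_eval_le:
  fixes e :: real
  assumes "\<And>s. s \<in> fst ` set w \<Longrightarrow> \<alpha> s \<in> Bij \<Omega> \<and> \<beta> s \<in> Bij \<Omega> \<and> ham_dist \<Omega> (\<alpha> s) (\<beta> s) \<le> e"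
  shows "ham_dist \<Omega> (word_eval (BijGroup \<Omega>) (map (apfst \<alpha>) w)) (word_eval (BijGroup \<Omega>) (map (apfst \<beta>) w))
    \<le> real (length w) * e"
  using assms
proof (induction w)
  case Nil
  then show ?case by (simp add: ham_dist_eq_0)
next
  case (Cons a w)
  interpret Sym: group "BijGroup \<Omega>" by (rule group_BijGroup)
  obtain s b where a: "a = (s, b)" by fastforce
  let ?letter = "\<lambda>\<gamma>. if b then \<gamma> s else inv\<^bsub>BijGroup \<Omega>\<^esub> (\<gamma> s)"
  let ?word = "\<lambda>\<gamma>. word_eval (BijGroup \<Omega>) (map (apfst \<gamma>) w)"
  have letters: "?letter \<alpha> \<in> Bij \<Omega>" "?letter \<beta> \<in> Bij \<Omega>" "ham_dist \<Omega> (?letter \<alpha>) (?letter \<beta>) \<le> e"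
    using Cons.prems[of s] a Sym.inv_closed by (auto simp: ham_dist_BijGroup_inv)
  have words: "?word \<alpha> \<in> Bij \<Omega>" "?word \<beta> \<in> Bij \<Omega>"
    using Cons.prems Sym.word_eval_closed[of "map (apfst \<alpha>) w"] Sym.word_eval_closed[of "map (apfst \<beta>) w"]
    by auto
  have "ham_dist \<Omega> (?letter \<alpha> \<otimes>\<^bsub>BijGroup \<Omega>\<^esub> ?word \<alpha>) (?letter \<beta> \<otimes>\<^bsub>BijGroup \<Omega>\<^esub> ?word \<beta>)
      \<le> ham_dist \<Omega> (?letter \<alpha>) (?letter \<beta>) + ham_dist \<Omega> (?word \<alpha>) (?word \<beta>)"
    using letters words by (intro ham_dist_BijGroup_mult_le)
  also have "\<dots> \<le> e + real (length w) * e"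
    using letters Cons by (intro add_mono) auto
  finally show ?case using a by (simp add: algebra_simps)
qed

lemma ham_dist_lt_1_imp_agree:
  assumes "finite \<Omega>" "\<Omega> \<noteq> {}" "ham_dist \<Omega> \<sigma> \<tau> < 1"
  obtains \<omega> where "\<omega> \<in> \<Omega>" "\<sigma> \<omega> = \<tau> \<omega>"
proof -
  have "card {\<omega> \<in> \<Omega>. \<sigma> \<omega> \<noteq> \<tau> \<omega>} < card \<Omega>"
    using assms by (simp add: ham_dist_def card_gt_0_iff)
  then have "{\<omega> \<in> \<Omega>. \<sigma> \<omega> \<noteq> \<tau> \<omega>} \<noteq> \<Omega>" by auto
  then show ?thesis using that by blast
qed

definition left_translation :: "('a, 'b) monoid_scheme \<Rightarrow> 'a \<Rightarrow> 'a \<Rightarrow> 'a" where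
  "left_translation G a = (\<lambda>x \<in> carrier G. a \<otimes>\<^bsub>G\<^esub> x)"

lemma (in group) left_translation_Bij: "a \<in> carrier G \<Longrightarrow> left_translation G a \<in> Bij (carrier G)"
proof -
  assume a: "a \<in> carrier G"
  have "bij_betw (\<lambda>x. a \<otimes> x) (carrier G) (carrier G)"
    by (rule bij_betwI[where g = "\<lambda>x. inv a \<otimes> x"]) (use a in \<open>auto simp: m_assoc[symmetric]\<close>)
  then show ?thesis by (simp add: Bij_def left_translation_def)
qed

lemma (in group) left_translation_hom: "left_translation G \<in> hom G (BijGroup (carrier G))"
proof (rule homI)
  show "left_translation G a \<in> carrier (BijGroup (carrier G))" if "a \<in> carrier G" for a
    using left_translation_Bij[OF that] by simp
next
  fix a b assume "a \<in> carrier G" "b \<in> carrier G"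
  then show "left_translation G (a \<otimes> b) =
      left_translation G a \<otimes>\<^bsub>BijGroup (carrier G)\<^esub> left_translation G b"
    by (simp add: BijGroup_mult left_translation_Bij)
      (auto simp: left_translation_def compose_def m_assoc)
qed

lemma eq_if_ham_dist_left_translation_lt_1:
  fixes D :: "(nat, 'b) monoid_scheme"
  assumes "group D" "finite (carrier D)" "a \<in> carrier D" "b \<in> carrier D"
    and "ham_dist (carrier D) (left_translation D a) (left_translation D b) < 1"
  shows "a = b"
proof -
  interpret group D by fact
  obtain x where "x \<in> carrier D" "a \<otimes>\<^bsub>D\<^esub> x = b \<otimes>\<^bsub>D\<^esub> x"
    using ham_dist_lt_1_imp_agree[OF assms(2) _ assms(5)] by (auto simp: left_translation_def)
  then show ?thesis using assms(3,4) by simp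
qed

section \<open>Local embeddings of word balls\<close>

lemma word_eval_in_word_ball:
  "fst ` set w \<subseteq> S \<Longrightarrow> real (length w) \<le> t \<Longrightarrow> word_eval G w \<in> word_ball G S t"
  by (auto simp: word_ball_def)

lemma (in group) word_ball_subset_carrier: "S \<subseteq> carrier G \<Longrightarrow> word_ball G S t \<subseteq> carrier G"
  using word_eval_closed by (auto simp: word_ball_def)

lemma word_ball_mono: "t \<le> t' \<Longrightarrow> word_ball G S t \<subseteq> word_ball G S t'"
  by (auto simp: word_ball_def)

lemma finite_word_ball:
  assumes "finite S"
  shows "finite (word_ball G S t)"
proof -
  have "word_ball G S t \<subseteq> word_eval G ` {w. set w \<subseteq> S \<times> UNIV \<and> length w \<le> nat \<lfloor>t\<rfloor>}"
  proof
    fix g assume "g \<in> word_ball G S t"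
    then obtain w where w: "g = word_eval G w" "fst ` set w \<subseteq> S" "real (length w) \<le> t"
      by (auto simp: word_ball_def)
    then have "set w \<subseteq> S \<times> UNIV" "length w \<le> nat \<lfloor>t\<rfloor>"
      by (force, simp add: le_nat_floor)
    with w(1) show "g \<in> word_eval G ` {w. set w \<subseteq> S \<times> UNIV \<and> length w \<le> nat \<lfloor>t\<rfloor>}"
      by blast
  qed
  moreover have "finite {w. set w \<subseteq> S \<times> (UNIV :: bool set) \<and> length w \<le> nat \<lfloor>t\<rfloor>}"
    using assms by (intro finite_lists_length_le) simp
  ultimately show ?thesis by (meson finite_surj)
qed

locale ball_local_embedding = G: group G + D: group D
  for G :: "('g, 'm) monoid_scheme" and D :: "('d, 'n) monoid_scheme" +
  fixes S :: "'g set" and t :: real and \<psi> :: "'g \<Rightarrow> 'd"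
  assumes generators_closed: "S \<subseteq> carrier G"
    and radius_ge_1: "1 \<le> t"
    and local_embedding: "local_embedding G (word_ball G S t) D \<psi>"
begin

lemma one_in_word_ball: "\<one>\<^bsub>G\<^esub> \<in> word_ball G S t"
  using word_eval_in_word_ball[of "[]" S t G] radius_ge_1 by simp

lemma letter_in_word_ball: "s \<in> S \<Longrightarrow> (if b then s else inv\<^bsub>G\<^esub> s) \<in> word_ball G S t"
  using word_eval_in_word_ball[of "[(s, b)]" S t G] radius_ge_1 generators_closed by auto

lemma local_embedding_closed: "g \<in> word_ball G S t \<Longrightarrow> \<psi> g \<in> carrier D"
  using local_embedding by (auto simp: local_embedding_def)

lemma local_embedding_generator_closed: "s \<in> S \<Longrightarrow> \<psi> s \<in> carrier D"
  using local_embedding_closed letter_in_word_ball[of s True] by simp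

lemma local_embedding_mult:
  "g \<in> word_ball G S t \<Longrightarrow> h \<in> word_ball G S t \<Longrightarrow> g \<otimes>\<^bsub>G\<^esub> h \<in> word_ball G S t \<Longrightarrow>
    \<psi> (g \<otimes>\<^bsub>G\<^esub> h) = \<psi> g \<otimes>\<^bsub>D\<^esub> \<psi> h"
  using local_embedding by (simp add: local_embedding_def)

lemma local_embedding_one: "\<psi> \<one>\<^bsub>G\<^esub> = \<one>\<^bsub>D\<^esub>"
  using local_embedding_mult[OF one_in_word_ball one_in_word_ball]
    local_embedding_closed[OF one_in_word_ball] one_in_word_ball
  by simp

lemma local_embedding_inv: "s \<in> S \<Longrightarrow> \<psi> (inv\<^bsub>G\<^esub> s) = inv\<^bsub>D\<^esub> (\<psi> s)"
  using local_embedding_mult[OF letter_in_word_ball[of s False] letter_in_word_ball[of s True]]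
    local_embedding_closed[OF letter_in_word_ball[of s False]]
    local_embedding_closed[OF letter_in_word_ball[of s True]]
    generators_closed local_embedding_one one_in_word_ball
  by (auto intro!: D.inv_equality[symmetric])

lemma local_embedding_word_eval:
  assumes "fst ` set w \<subseteq> S" "real (length w) \<le> t"
  shows "\<psi> (word_eval G w) = word_eval D (map (apfst \<psi>) w)"
  using assms
proof (induction w)
  case Nil
  then show ?case by (simp add: local_embedding_one)
next
  case (Cons a w)
  obtain s b where a: "a = (s, b)" by fastforce
  with Cons.prems have s: "s \<in> S" and w: "fst ` set w \<subseteq> S" "real (length w) \<le> t"
    by auto
  have "\<psi> (word_eval G (a # w)) = \<psi> (if b then s else inv\<^bsub>G\<^esub> s) \<otimes>\<^bsub>D\<^esub> \<psi> (word_eval G w)"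
    using a local_embedding_mult[OF letter_in_word_ball[OF s, of b] word_eval_in_word_ball[where G = G, OF w]]
      word_eval_in_word_ball[where G = G, OF Cons.prems]
    by simp
  then show ?case using Cons.IH[OF w] a s by (simp add: local_embedding_inv)
qed

lemma word_eval_relator:
  assumes "\<pi> \<in> hom (free_group B) G" "\<pi> ` free_gen ` B \<subseteq> S"
    and "r \<in> kernel (free_group B) G \<pi>" "real (length r) \<le> t"
  shows "word_eval D (map (apfst (\<psi> \<circ> \<pi> \<circ> free_gen)) r) = \<one>\<^bsub>D\<^esub>"
proof -
  have r: "r \<in> carrier (free_group B)" "\<pi> r = \<one>\<^bsub>G\<^esub>"
    using assms(3) by (auto simp: kernel_def)
  have letters: "fst ` set (map (apfst (\<pi> \<circ> free_gen)) r) \<subseteq> S"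
    using r(1) assms(2) by (auto simp: free_group_carrier image_subset_iff)
  have "word_eval D (map (apfst (\<psi> \<circ> \<pi> \<circ> free_gen)) r)
      = word_eval D (map (apfst \<psi>) (map (apfst (\<pi> \<circ> free_gen)) r))"
    by (simp add: comp_def apfst_compose)
  also have "\<dots> = \<psi> (word_eval G (map (apfst (\<pi> \<circ> free_gen)) r))"
    using letters assms(4) by (simp add: local_embedding_word_eval)
  also have "\<dots> = \<psi> (\<pi> r)"
    using G.hom_free_group_eq_word_eval[OF assms(1) r(1)] by simp
  finally show ?thesis by (simp add: r(2) local_embedding_one)
qed

end

lemma ham_dist_left_translation_le_on_word_ball:
  fixes D :: "(nat, 'n) monoid_scheme"
  assumes "ball_local_embedding G D S t \<psi>" "\<phi> \<in> hom G (BijGroup (carrier D))"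
    and "\<And>s. s \<in> S \<Longrightarrow> ham_dist (carrier D) (left_translation D (\<psi> s)) (\<phi> s) \<le> \<epsilon>"
    and "0 \<le> \<epsilon>" "r \<le> t" "g \<in> word_ball G S r"
  shows "ham_dist (carrier D) (left_translation D (\<psi> g)) (\<phi> g) \<le> r * \<epsilon>"
proof -
  interpret ball_local_embedding G D S t \<psi> by fact
  interpret \<phi>: group_hom G "BijGroup (carrier D)" \<phi>
    using assms(2) group_BijGroup by (simp add: group_hom_def group_hom_axioms_def G.group_axioms)
  interpret L: group_hom D "BijGroup (carrier D)" "left_translation D"
    using D.left_translation_hom group_BijGroup by (simp add: group_hom_def group_hom_axioms_def D.group_axioms)
  obtain w where g: "g = word_eval G w" and w: "fst ` set w \<subseteq> S" "real (length w) \<le> r"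
    using assms(6) by (auto simp: word_ball_def)
  have "left_translation D (\<psi> g) = left_translation D (word_eval D (map (apfst \<psi>) w))"
    using g w assms(5) by (simp add: local_embedding_word_eval)
  also have "\<dots> = word_eval (BijGroup (carrier D)) (map (apfst (left_translation D \<circ> \<psi>)) w)"
    using w local_embedding_generator_closed by (subst L.hom_word_eval) (auto simp: comp_def apfst_compose)
  finally have "ham_dist (carrier D) (left_translation D (\<psi> g)) (\<phi> g)
      = ham_dist (carrier D) (word_eval (BijGroup (carrier D)) (map (apfst (left_translation D \<circ> \<psi>)) w))
          (word_eval (BijGroup (carrier D)) (map (apfst \<phi>) w))"
    using g w generators_closed by (simp add: \<phi>.hom_word_eval)
  also have "\<dots> \<le> real (length w) * \<epsilon>"
  proof (rule ham_dist_word_eval_le)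
    fix s assume "s \<in> fst ` set w"
    then have "s \<in> S" using w(1) by blast
    then show "(left_translation D \<circ> \<psi>) s \<in> Bij (carrier D) \<and> \<phi> s \<in> Bij (carrier D) \<and>
        ham_dist (carrier D) ((left_translation D \<circ> \<psi>) s) (\<phi> s) \<le> \<epsilon>"
      using local_embedding_generator_closed assms(3) generators_closed \<phi>.hom_closed
      by (auto simp: D.left_translation_Bij)
  qed
  also have "\<dots> \<le> r * \<epsilon>"
    using w assms(4) by (simp add: mult_right_mono)
  finally show ?thesis .
qed

lemma inj_on_word_ball_if_close_to_left_translation:
  fixes D :: "(nat, 'n) monoid_scheme"
  assumes "ball_local_embedding G D S t \<psi>" "finite (carrier D)" "\<phi> \<in> hom G (BijGroup (carrier D))"
    and "\<And>s. s \<in> S \<Longrightarrow> ham_dist (carrier D) (left_translation D (\<psi> s)) (\<phi> s) \<le> \<epsilon>"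
    and "0 \<le> \<epsilon>" "2 * r * \<epsilon> < 1" "r \<le> t"
  shows "inj_on \<phi> (word_ball G S r)"
proof (rule inj_onI)
  interpret ball_local_embedding G D S t \<psi> by fact
  fix g h assume g: "g \<in> word_ball G S r" and h: "h \<in> word_ball G S r" and "\<phi> g = \<phi> h"
  then have "ham_dist (carrier D) (left_translation D (\<psi> g)) (left_translation D (\<psi> h))
      \<le> ham_dist (carrier D) (left_translation D (\<psi> g)) (\<phi> g)
        + ham_dist (carrier D) (left_translation D (\<psi> h)) (\<phi> h)"
    using ham_dist_triangle[of "carrier D" _ _ "\<phi> g"] ham_dist_commute[of "carrier D" "\<phi> h"] by simp
  also have "\<dots> \<le> r * \<epsilon> + r * \<epsilon>"
    using ham_dist_left_translation_le_on_word_ball[OF assms(1,3,4,5,7)] g h by (intro add_mono)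
  also have "\<dots> < 1"
    using assms(6) by linarith
  finally have close: "ham_dist (carrier D) (left_translation D (\<psi> g)) (left_translation D (\<psi> h)) < 1" .
  have "g \<in> word_ball G S t" "h \<in> word_ball G S t"
    using g h word_ball_mono[OF assms(7), of G S] by blast+
  moreover from this have "\<psi> g = \<psi> h"
    using assms(2) close
    by (intro eq_if_ham_dist_left_translation_lt_1[OF D.group_axioms]) (simp_all add: local_embedding_closed)
  ultimately show "g = h"
    using local_embedding by (auto simp: local_embedding_def dest: inj_onD)
qed

section \<open>From stability to residual finiteness\<close>

lemma LEF_growth_attained:
  assumes "group G" "LEF G" "finite S" "S \<subseteq> carrier G"
  obtains D :: "nat monoid" and \<psi> where "group D" "finite (carrier D)"
    "card (carrier D) = LEF_growth G S t" "local_embedding G (word_ball G S t) D \<psi>"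
proof -
  have "finite (word_ball G S t)" "word_ball G S t \<subseteq> carrier G"
    using finite_word_ball[OF assms(3)] group.word_ball_subset_carrier[OF assms(1,4)] .
  then obtain D :: "nat monoid" and \<psi> where
    D: "group D" "finite (carrier D)" "local_embedding G (word_ball G S t) D \<psi>"
    using assms(2) unfolding LEF_def by blast
  then have "\<exists>n. \<exists>D :: nat monoid. group D \<and> finite (carrier D) \<and> card (carrier D) = n \<and>
      (\<exists>\<psi>. local_embedding G (word_ball G S t) D \<psi>)"
    by (intro exI[of _ "card (carrier D)"] exI[of _ D]) auto
  then have "\<exists>D :: nat monoid. group D \<and> finite (carrier D) \<and> card (carrier D) = LEF_growth G S t \<and>
      (\<exists>\<psi>. local_embedding G (word_ball G S t) D \<psi>)"
    unfolding LEF_growth_def by (rule LeastI_ex)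
  then show ?thesis using that by blast
qed

lemma finite_group_iso_nat_monoid:
  assumes "group H" "finite (carrier H)"
  obtains D :: "nat monoid" and e where "group D" "e \<in> iso H D"
proof -
  interpret H: group H by fact
  obtain e :: "_ \<Rightarrow> nat" where e: "inj_on e (carrier H)"
    using finite_imp_inj_to_nat_seg[OF assms(2)] by blast
  define D :: "nat monoid" where "D =
    \<lparr>partial_object.carrier = e ` carrier H,
     monoid.mult = (\<lambda>a b. e (inv_into (carrier H) e a \<otimes>\<^bsub>H\<^esub> inv_into (carrier H) e b)),
     monoid.one = e \<one>\<^bsub>H\<^esub>\<rparr>"
  have hom: "e \<in> hom H D"
    using e by (intro homI) (simp_all add: D_def)
  then have "group (D\<lparr>carrier := e ` carrier H, one := e \<one>\<^bsub>H\<^esub>\<rparr>)"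
    by (rule H.hom_imp_img_group)
  moreover have "D\<lparr>carrier := e ` carrier H, one := e \<one>\<^bsub>H\<^esub>\<rparr> = D"
    by (simp add: D_def)
  moreover have "e \<in> iso H D"
    using hom e by (intro isoI) (simp_all add: D_def bij_betw_def)
  ultimately show ?thesis using that by simp
qed

lemma RF_growth_le_card:
  assumes "group G" "S \<subseteq> carrier G" "group H" "finite (carrier H)"
    and "h \<in> hom G H" "inj_on h (word_ball G S (real l))"
  shows "RF_growth G S l \<le> card (carrier H)"
proof -
  obtain D :: "nat monoid" and e where D: "group D" "e \<in> iso H D"
    using finite_group_iso_nat_monoid[OF assms(3,4)] .
  have "card (carrier D) = card (carrier H)" "finite (carrier D)"
    using is_isoI[OF D(2)] assms(4) iso_same_card iso_finite by metis+
  moreover have "e \<circ> h \<in> hom G D"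
    using D(2) assms(5) by (auto simp: iso_def intro: hom_compose)
  moreover have "inj_on (e \<circ> h) (word_ball G S (real l))"
  proof (rule comp_inj_on[OF assms(6)])
    show "inj_on e (h ` word_ball G S (real l))"
      using D(2) group.word_ball_subset_carrier[OF assms(1,2)] hom_carrier[OF assms(5)]
      unfolding iso_def bij_betw_def by (blast intro: inj_on_subset)
  qed
  ultimately show ?thesis
    unfolding RF_growth_def using D(1) by (intro Least_le) blast
qed

lemma valid_pair_with_short_relators:
  assumes "stable B G \<pi>" "0 < x" "stability_fun B G \<pi> x < c"
  obtains \<delta> E where "valid_pair B G \<pi> (1 / x) \<delta> E" "\<And>r. r \<in> E \<Longrightarrow> real (length r) < c"
proof -
  let ?norms = "{word_set_norm E / \<delta> | \<delta> E. valid_pair B G \<pi> (1 / x) \<delta> E}"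
  have "0 < 1 / x" using assms(2) by simp
  then obtain \<delta>\<^sub>0 E\<^sub>0 where "valid_pair B G \<pi> (1 / x) \<delta>\<^sub>0 E\<^sub>0"
    using assms(1) unfolding stable_def by blast
  then have "?norms \<noteq> {}" by blast
  then obtain \<delta> E where valid: "valid_pair B G \<pi> (1 / x) \<delta> E" and norm: "word_set_norm E / \<delta> < c"
    using cInf_lessD[of ?norms c] assms(3) unfolding stability_fun_def by blast
  have \<delta>: "0 < \<delta>" "\<delta> \<le> 1" and E: "finite E"
    using valid by (simp_all add: valid_pair_def)
  have "real (length r) < c" if "r \<in> E" for r
  proof -
    have "real (length r) \<le> word_set_norm E"
      unfolding word_set_norm_def using member_le_sum[OF that _ E, of length] by (simp only: of_nat_le_iff)
    also have "\<dots> \<le> word_set_norm E / \<delta>"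
      using \<delta> by (simp add: le_divide_eq mult_left_le word_set_norm_def sum_nonneg)
    finally show ?thesis using norm by linarith
  qed
  with valid show ?thesis using that by blast
qed

lemma hom_close_to_left_translation_exists:
  fixes D :: "(nat, 'n) monoid_scheme"
  assumes emb: "ball_local_embedding G D (\<pi> ` free_gen ` B) t \<psi>"
    and "finite (carrier D)" "\<pi> \<in> hom (free_group B) G"
    and valid: "valid_pair B G \<pi> \<epsilon> \<delta> E" and short: "\<And>r. r \<in> E \<Longrightarrow> real (length r) \<le> t"
  obtains \<phi> where "\<phi> \<in> hom G (BijGroup (carrier D))"
    "\<And>s. s \<in> \<pi> ` free_gen ` B \<Longrightarrow> ham_dist (carrier D) (left_translation D (\<psi> s)) (\<phi> s) < \<epsilon>"
proof -
  interpret ball_local_embedding G D "\<pi> ` free_gen ` B" t \<psi> by (rule emb)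
  define \<rho> where "\<rho> = left_translation D \<circ> (\<lambda>w. word_eval D (map (apfst (\<psi> \<circ> \<pi> \<circ> free_gen)) w))"
  have \<rho>_hom: "\<rho> \<in> hom (free_group B) (BijGroup (carrier D))"
    unfolding \<rho>_def using local_embedding_generator_closed
    by (intro hom_compose[OF D.word_eval_hom_free_group D.left_translation_hom]) auto
  have "ham_dist (carrier D) (\<rho> r) id < \<delta>" if "r \<in> E" for r
  proof -
    have "r \<in> kernel (free_group B) G \<pi>" using valid that by (auto simp: valid_pair_def)
    then have "\<rho> r = left_translation D \<one>\<^bsub>D\<^esub>"
      using word_eval_relator[OF assms(3)] short[OF that] by (simp add: \<rho>_def)
    then have "ham_dist (carrier D) (\<rho> r) id = 0"
      by (intro ham_dist_eq_0) (simp add: left_translation_def)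
    then show ?thesis using valid by (simp add: valid_pair_def)
  qed
  then obtain \<phi> where \<phi>: "\<phi> \<in> hom G (BijGroup (carrier D))"
    and close: "\<forall>x\<in>B. ham_dist (carrier D) (\<rho> (free_gen x)) (\<phi> (\<pi> (free_gen x))) < \<epsilon>"
    using valid assms(2) \<rho>_hom unfolding valid_pair_def by blast
  have "\<rho> (free_gen x) = left_translation D (\<psi> (\<pi> (free_gen x)))" if "x \<in> B" for x
    using local_embedding_generator_closed that by (simp add: \<rho>_def free_gen_def)
  with \<phi> close show ?thesis using that by fastforce
qed

theorem RF_growth_le_fact_LEF_growth:
  assumes "group G" "LEF G" "finite B" "\<pi> \<in> hom (free_group B) G"
    and valid: "valid_pair B G \<pi> \<epsilon> \<delta> E" and short: "\<And>r. r \<in> E \<Longrightarrow> real (length r) \<le> t"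
    and "0 \<le> \<epsilon>" "2 * real l * \<epsilon> < 1" "1 \<le> t" "real l \<le> t"
  shows "RF_growth G (\<pi> ` free_gen ` B) l \<le> fact (LEF_growth G (\<pi> ` free_gen ` B) t)"
proof -
  let ?S = "\<pi> ` free_gen ` B"
  have S: "finite ?S" "?S \<subseteq> carrier G"
    using assms(3) hom_carrier[OF assms(4)] by (auto simp: free_group_carrier free_gen_def)
  obtain D :: "nat monoid" and \<psi> where D: "group D" "finite (carrier D)"
      "card (carrier D) = LEF_growth G ?S t" "local_embedding G (word_ball G ?S t) D \<psi>"
    using LEF_growth_attained[OF assms(1,2) S] .
  have emb: "ball_local_embedding G D ?S t \<psi>"
    using assms(1,9) D(1,4) S(2) by (simp add: ball_local_embedding_def ball_local_embedding_axioms_def)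
  obtain \<phi> where \<phi>: "\<phi> \<in> hom G (BijGroup (carrier D))"
    and close: "\<And>s. s \<in> ?S \<Longrightarrow> ham_dist (carrier D) (left_translation D (\<psi> s)) (\<phi> s) < \<epsilon>"
    using hom_close_to_left_translation_exists[OF emb D(2) assms(4) valid short] by blast
  have "inj_on \<phi> (word_ball G ?S (real l))"
    using emb D(2) \<phi> close assms(7,8,10)
    by (intro inj_on_word_ball_if_close_to_left_translation) (auto simp: less_imp_le)
  then have "RF_growth G ?S l \<le> card (carrier (BijGroup (carrier D)))"
    using finite_Bij[OF D(2)] by (intro RF_growth_le_card[OF assms(1) S(2) group_BijGroup _ \<phi>]) simp
  also have "\<dots> \<le> fact (card (carrier D))"
    using card_Bij_le_fact[OF D(2)] by simp
  finally show ?thesis using D(3) by simp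
qed

theorem corollary2p15:
  fixes B :: "'x set" and G :: "('g, 'm) monoid_scheme"
    and \<pi> :: "('x \<times> bool) list \<Rightarrow> 'g" and C :: real
  assumes "group G"
    and "\<exists>A. finite A \<and> A \<subseteq> carrier G \<and> generate G A = carrier G"
    and "stable B G \<pi>"
    and "LEF G"
    and "finite B"
    and "\<pi> \<in> epi (free_group B) G"
    and "C \<ge> 1"
    and "\<forall>x::real. x \<ge> 1 \<longrightarrow> stability_fun B G \<pi> x \<le> C * x powr C"
  shows "\<exists>C'::real. C' > 0 \<and>
     (\<forall>l::nat. l \<ge> 1 \<longrightarrow>
        fact (LEF_growth G (\<pi> ` free_gen ` B) (C' * real l powr C))
          \<ge> RF_growth G (\<pi> ` free_gen ` B) l)"
proof -
  define C' where "C' = C * 3 powr C + 1"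
  have "RF_growth G (\<pi> ` free_gen ` B) l \<le> fact (LEF_growth G (\<pi> ` free_gen ` B) (C' * real l powr C))"
    if l: "l \<ge> 1" for l
  proof -
    have l_le_pow: "real l \<le> real l powr C"
      using powr_mono[of 1 C "real l"] assms(7) l by simp
    have "stability_fun B G \<pi> (3 * real l) \<le> C * (3 * real l) powr C"
      using assms(8) l by simp
    also have "\<dots> < C' * real l powr C"
      using l by (simp add: C'_def powr_mult algebra_simps)
    finally have "stability_fun B G \<pi> (3 * real l) < C' * real l powr C" .
    moreover have "0 < 3 * real l" using l by simp
    ultimately obtain \<delta> E where valid: "valid_pair B G \<pi> (1 / (3 * real l)) \<delta> E"
      and short: "\<And>r. r \<in> E \<Longrightarrow> real (length r) < C' * real l powr C"
      using valid_pair_with_short_relators[OF assms(3)] by blast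
    have "0 \<le> C * 3 powr C * real l powr C"
      using assms(7) by simp
    then have "real l \<le> C' * real l powr C" "1 \<le> C' * real l powr C"
      using l_le_pow l by (simp_all add: C'_def algebra_simps)
    then show ?thesis
      using assms(1,4,5,6) valid short l
      by (intro RF_growth_le_fact_LEF_growth[where \<epsilon> = "1 / (3 * real l)"])
        (auto simp: epi_def less_imp_le)
  qed
  moreover have "C' > 0"
    unfolding C'_def using assms(7) by (simp add: add_nonneg_pos)
  ultimately show ?thesis by auto
qed

end
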